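(* Let $n\ge 2$ and let $P(z)=\sum_{j=0}^{2n}p_jz^j$ be a polynomial with real coefficients, $p_{2n}\neq 0$, which is self-reciprocal, i.e. $p_j=p_{2n-j}$ for $j=0,\dots,2n$. Put $$C_n(x)=p_{2n}T_n(x)+p_{2n-1}T_{n-1}(x)+\cdots+p_{n+1}T_1(x)+\tfrac{p_n}{2}T_0(x),$$ so that $P(z)=2z^nC_n(x)$ with $x=\tfrac12\left(z+\tfrac1z\right)$. For each kind $\alpha\in\{T,U,V,W\}$, with $Q^{\alpha}_m$ denoting the Chebyshev polynomial of degree $m$ of that kind ($Q^T=T,\ Q^U=U,\ Q^V=V,\ Q^W=W$), define the class $\mathcal{P}_\alpha$ of such polynomials $P$ by: 1. $\mathcal{P}_T$: $p_{2n-2}=p_{2n-3}=\cdots=p_n=0$ and $p_{2n}p_{2n-1}\neq 0$; 2. $\mathcal{P}_U$: $p_j=p_{2n}$ for every even $j$ with $n\le j\le 2n$, $p_j=p_{2n-1}$ for every odd $j$ with $n\le j\le 2n$, and $p_{2n}p_{2n-1}\ne 0$; 3. $\mathcal{P}_V$: $p_{2n-k}=(-1)^{k-1}p_{2n-1}$ for $k=1,\dots,n$ (i.e. $p_{2n-1}=-p_{2n-2}=p_{2n-3}=\cdots=(-1)^np_{n+1}=(-1)^{n-1}p_n$), $p_{2n}\neq0$ and $p_{2n}\neq -p_{2n-1}$; 4. $\mathcal{P}_W$: $p_{2n-1}=p_{2n-2}=\cdots=p_n$, $p_{2n}\ne 0$ and $p_{2n}\neq p_{2n-1}$. Then for each $\alpha$,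 $P\in\mathcal{P}_\alpha$ if and only if $C_n(x)=c_0Q^\alpha_n(x)+c_1Q^\alpha_{n-1}(x)$ for some real $c_0,c_1$ with $c_0c_1\neq 0$ (i.e. $C_n$ is a Chebyshev quasi-orthogonal polynomial of order one of kind $\alpha$). Explicitly, for $P$ in the respective class: $C_n=p_{2n}T_n+p_{2n-1}T_{n-1}$; $C_n=\tfrac{p_{2n}}2U_n+\tfrac{p_{2n-1}}2U_{n-1}$; $C_n=\tfrac{p_{2n}}2V_n+\tfrac{p_{2n}+p_{2n-1}}2V_{n-1}$; $C_n=\tfrac{p_{2n}}2W_n+\tfrac{p_{2n-1}-p_{2n}}2W_{n-1}$.
   Context: Chebyshev polynomials of degree $m$ of the first, second, third and fourth kinds are defined, for $x=\cos\theta$, by $T_m(x)=\cos m\theta$, $U_m(x)=\frac{\sin(m+1)\theta}{\sin\theta}$, $V_m(x)=\frac{\cos(m+\frac12)\theta}{\cos\frac12\theta}$, $W_m(x)=\frac{\sin(m+\frac12)\theta}{\sin\frac12\theta}$. A polynomial of degree $n$ is called quasi-orthogonal of order one with respect to an orthogonal family $\{Q_m\}$ if it equals $c_0Q_n+c_1Q_{n-1}$ with $c_0c_1\neq0$. *)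

theory Defs
  imports "HOL-Computational_Algebra.Polynomial" Complex_Main
begin

text \<open>Chebyshev polynomials of the four kinds, via the standard three-term recurrence
  Q_{m+2} = 2x Q_{m+1} - Q_m with Q_0 = 1 and
  T_1 = x, U_1 = 2x, V_1 = 2x - 1, W_1 = 2x + 1.
  These are exactly the polynomials with T_m(cos t) = cos(m t),
  U_m(cos t) = sin((m+1)t)/sin t, V_m(cos t) = cos((m+1/2)t)/cos(t/2),
  W_m(cos t) = sin((m+1/2)t)/sin(t/2).\<close>

fun chebT :: "nat \<Rightarrow> real poly" where
  "chebT 0 = 1"
| "chebT (Suc 0) = [:0, 1:]"
| "chebT (Suc (Suc m)) = [:0, 2:] * chebT (Suc m) - chebT m"

fun chebU :: "nat \<Rightarrow> real poly" where
  "chebU 0 = 1"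
| "chebU (Suc 0) = [:0, 2:]"
| "chebU (Suc (Suc m)) = [:0, 2:] * chebU (Suc m) - chebU m"

fun chebV :: "nat \<Rightarrow> real poly" where
  "chebV 0 = 1"
| "chebV (Suc 0) = [:-1, 2:]"
| "chebV (Suc (Suc m)) = [:0, 2:] * chebV (Suc m) - chebV m"

fun chebW :: "nat \<Rightarrow> real poly" where
  "chebW 0 = 1"
| "chebW (Suc 0) = [:1, 2:]"
| "chebW (Suc (Suc m)) = [:0, 2:] * chebW (Suc m) - chebW m"

definition quasi_orth1 :: "(nat \<Rightarrow> real poly) \<Rightarrow> nat \<Rightarrow> real poly \<Rightarrow> bool" where
  "quasi_orth1 Q n C \<longleftrightarrow>
     (\<exists>c0 c1 :: real. c0 * c1 \<noteq> 0 \<and> C = smult c0 (Q n) + smult c1 (Q (n - 1)))"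

definition chebC :: "real poly \<Rightarrow> nat \<Rightarrow> real poly" where
  "chebC P n = (\<Sum>k=1..n. smult (coeff P (n + k)) (chebT k)) + smult (coeff P n / 2) (chebT 0)"

definition self_reciprocal :: "real poly \<Rightarrow> nat \<Rightarrow> bool" where
  "self_reciprocal P n \<longleftrightarrow> (\<forall>j\<le>2*n. coeff P j = coeff P (2*n - j))"

definition classT :: "real poly \<Rightarrow> nat \<Rightarrow> bool" where
  "classT P n \<longleftrightarrow> (\<forall>j. n \<le> j \<and> j \<le> 2*n - 2 \<longrightarrow> coeff P j = 0)
      \<and> coeff P (2*n) * coeff P (2*n - 1) \<noteq> 0"

definition classU :: "real poly \<Rightarrow> nat \<Rightarrow> bool" where
  "classU P n \<longleftrightarrow> (\<forall>j. n \<le> j \<and> j \<le> 2*n \<longrightarrow>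
        (even j \<longrightarrow> coeff P j = coeff P (2*n)) \<and> (odd j \<longrightarrow> coeff P j = coeff P (2*n - 1)))
      \<and> coeff P (2*n) * coeff P (2*n - 1) \<noteq> 0"

definition classV :: "real poly \<Rightarrow> nat \<Rightarrow> bool" where
  "classV P n \<longleftrightarrow> (\<forall>k. 1 \<le> k \<and> k \<le> n \<longrightarrow> coeff P (2*n - k) = (-1) ^ (k - 1) * coeff P (2*n - 1))
      \<and> coeff P (2*n) \<noteq> 0 \<and> coeff P (2*n) \<noteq> - coeff P (2*n - 1)"

definition classW :: "real poly \<Rightarrow> nat \<Rightarrow> bool" where
  "classW P n \<longleftrightarrow> (\<forall>j. n \<le> j \<and> j \<le> 2*n - 1 \<longrightarrow> coeff P j = coeff P (2*n - 1))
      \<and> coeff P (2*n) \<noteq> 0 \<and> coeff P (2*n) \<noteq> coeff P (2*n - 1)"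

end

theory Submission
  imports Defs
begin

text \<open>A polynomial of degree at most \<open>n\<close> has a unique expansion \<open>\<Sum>'\<^sub>k a\<^sub>k T\<^sub>k\<close>
  (the \<open>T\<^sub>0\<close> term halved), and \<open>C\<^sub>n\<close> is the one with \<open>a\<^sub>k = p\<^sub>n\<^sub>+\<^sub>k\<close>. The three-term
  recurrence gives \<open>U\<^sub>m - U\<^sub>m\<^sub>-\<^sub>2 = 2T\<^sub>m\<close>, \<open>V\<^sub>m - V\<^sub>m\<^sub>-\<^sub>2 = 2(T\<^sub>m - T\<^sub>m\<^sub>-\<^sub>1)\<close> and
  \<open>W\<^sub>m - W\<^sub>m\<^sub>-\<^sub>2 = 2(T\<^sub>m + T\<^sub>m\<^sub>-\<^sub>1)\<close>, so the \<open>T\<^sub>k\<close>-coefficients of \<open>U\<^sub>m\<close>, \<open>V\<^sub>m\<close>, \<open>W\<^sub>m\<close>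
  are \<open>2\<close> or \<open>0\<close> according to the parity of \<open>m - k\<close>, \<open>2(-1)\<^sup>m\<^sup>-\<^sup>k\<close>, and \<open>2\<close>.
  Comparing coefficients, \<open>C\<^sub>n = c\<^sub>0Q\<^sub>n + c\<^sub>1Q\<^sub>n\<^sub>-\<^sub>1\<close> is a linear system for
  \<open>p\<^sub>n, \<dots>, p\<^sub>2\<^sub>n\<close>, and its solutions with \<open>c\<^sub>0c\<^sub>1 \<noteq> 0\<close> are exactly the defining
  conditions of the corresponding class.\<close>

definition cheb_sum :: "(nat \<Rightarrow> real) \<Rightarrow> nat \<Rightarrow> real poly" where
  "cheb_sum a n = (\<Sum>k=1..n. smult (a k) (chebT k)) + smult (a 0 / 2) (chebT 0)"

lemma cheb_sum_0 [simp]: "cheb_sum a 0 = [:a 0 / 2:]"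
  by (simp add: cheb_sum_def)

lemma cheb_sum_Suc [simp]:
  "cheb_sum a (Suc n) = cheb_sum a n + smult (a (Suc n)) (chebT (Suc n))"
  by (simp add: cheb_sum_def)

lemma chebC_eq_cheb_sum: "chebC P n = cheb_sum (\<lambda>k. coeff P (n + k)) n"
  by (simp add: chebC_def cheb_sum_def)

lemma cheb_sum_cong: "(\<And>k. k \<le> n \<Longrightarrow> a k = b k) \<Longrightarrow> cheb_sum a n = cheb_sum b n"
  by (induction n) auto

lemma cheb_sum_add: "cheb_sum (\<lambda>k. a k + b k) n = cheb_sum a n + cheb_sum b n"
  by (induction n) (auto simp: smult_add_left add_divide_distrib)

lemma cheb_sum_diff: "cheb_sum (\<lambda>k. a k - b k) n = cheb_sum a n - cheb_sum b n"
  by (induction n) (auto simp: smult_diff_left diff_divide_distrib)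

lemma cheb_sum_smult: "cheb_sum (\<lambda>k. c * a k) n = smult c (cheb_sum a n)"
  by (induction n) (auto simp: smult_add_right)

lemma cheb_sum_extend:
  "m \<le> n \<Longrightarrow> (\<And>k. m < k \<Longrightarrow> a k = 0) \<Longrightarrow> cheb_sum a n = cheb_sum a m"
  by (induction n) (auto simp: le_Suc_eq)

lemma cheb_sum_Suc_Suc:
  assumes "\<And>k. k \<le> m \<Longrightarrow> b k = a k"
  shows "cheb_sum b (Suc (Suc m)) = cheb_sum a m
    + smult (b (Suc m)) (chebT (Suc m)) + smult (b (Suc (Suc m))) (chebT (Suc (Suc m)))"
  using cheb_sum_cong[OF assms] by simp

lemma degree_chebT_coeff_chebT:
  "degree (chebT m) \<le> m \<and> coeff (chebT m) m = (if m = 0 then 1 else 2 ^ (m - 1))"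
proof (induction m rule: chebT.induct)
  case (3 m)
  have x2: "[:0, 2:] * p = pCons 0 (smult 2 p)" for p :: "real poly"
    by simp
  have "degree ([:0, 2:] * chebT (Suc m)) \<le> Suc (Suc m)"
    unfolding x2 using 3 by (auto simp: degree_pCons_eq_if)
  then have "degree (chebT (Suc (Suc m))) \<le> Suc (Suc m)"
    using degree_diff_le[of _ "Suc (Suc m)" "chebT m"] 3 by simp
  moreover have "coeff (chebT m) (Suc (Suc m)) = 0"
    using 3 by (simp add: coeff_eq_0)
  ultimately show ?case
    using 3 by (simp add: x2)
qed simp_all

lemma coeff_cheb_sum_eq_0: "n < j \<Longrightarrow> coeff (cheb_sum a n) j = 0"
proof (induction n)
  case (Suc n)
  then have "coeff (chebT (Suc n)) j = 0"
    using degree_chebT_coeff_chebT[of "Suc n"] by (intro coeff_eq_0) linarith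
  with Suc show ?case
    by simp
qed (simp add: coeff_pCons split: nat.split)

lemma cheb_sum_eq_0D: "cheb_sum a n = 0 \<Longrightarrow> k \<le> n \<Longrightarrow> a k = 0"
proof (induction n arbitrary: k)
  case (Suc n)
  have "a (Suc n) * 2 ^ n = coeff (cheb_sum a (Suc n)) (Suc n)"
    using degree_chebT_coeff_chebT[of "Suc n"] by (simp add: coeff_cheb_sum_eq_0)
  then have "a (Suc n) = 0"
    unfolding Suc.prems(1) by simp
  with Suc show ?case
    by (cases "k = Suc n") auto
qed simp

lemma cheb_sum_eq_iff: "cheb_sum a n = cheb_sum b n \<longleftrightarrow> (\<forall>k\<le>n. a k = b k)"
  using cheb_sum_eq_0D[of "\<lambda>k. a k - b k" n] cheb_sum_cong[of n a b]
  by (auto simp: cheb_sum_diff)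

definition cheb_recurrence :: "(nat \<Rightarrow> real poly) \<Rightarrow> bool" where
  "cheb_recurrence f \<longleftrightarrow> (\<forall>m. f (Suc (Suc m)) = [:0, 2:] * f (Suc m) - f m)"

lemma cheb_recurrence_cheb:
  "cheb_recurrence chebT" "cheb_recurrence chebU" "cheb_recurrence chebV" "cheb_recurrence chebW"
  by (simp_all add: cheb_recurrence_def)

lemma cheb_recurrence_shift: "cheb_recurrence f \<Longrightarrow> cheb_recurrence (\<lambda>m. f (Suc m))"
  by (simp add: cheb_recurrence_def)

lemma cheb_recurrence_add:
  "cheb_recurrence f \<Longrightarrow> cheb_recurrence g \<Longrightarrow> cheb_recurrence (\<lambda>m. f m + g m)"
  unfolding cheb_recurrence_def by (simp only: ring_distribs) (simp add: algebra_simps)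

lemma cheb_recurrence_diff:
  "cheb_recurrence f \<Longrightarrow> cheb_recurrence g \<Longrightarrow> cheb_recurrence (\<lambda>m. f m - g m)"
  unfolding cheb_recurrence_def by (simp only: ring_distribs) (simp add: algebra_simps)

lemma cheb_recurrence_smult: "cheb_recurrence f \<Longrightarrow> cheb_recurrence (\<lambda>m. smult c (f m))"
  by (simp add: cheb_recurrence_def smult_diff_right)

lemma cheb_recurrence_unique:
  assumes "cheb_recurrence f" "cheb_recurrence g" "f 0 = g 0" "f 1 = g 1"
  shows "f = g"
proof
  fix m
  have "f m = g m \<and> f (Suc m) = g (Suc m)"
    by (induction m) (use assms in \<open>auto simp: cheb_recurrence_def\<close>)
  then show "f m = g m" ..
qed

lemmas cheb_recurrence_intros = cheb_recurrence_cheb cheb_recurrence_shift cheb_recurrence_add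
  cheb_recurrence_diff cheb_recurrence_smult

lemma chebU_Suc_Suc_minus:
  "chebU (Suc (Suc m)) - chebU m = smult 2 (chebT (Suc (Suc m)))"
proof -
  have "(\<lambda>m. chebU (Suc (Suc m)) - chebU m) = (\<lambda>m. smult 2 (chebT (Suc (Suc m))))"
    by (rule cheb_recurrence_unique)
      (intro cheb_recurrence_intros | simp add: numeral_2_eq_2 one_pCons numeral_poly)+
  then show ?thesis
    by (rule fun_cong)
qed

lemma chebV_Suc_Suc_minus:
  "chebV (Suc (Suc m)) - chebV m = smult 2 (chebT (Suc (Suc m)) - chebT (Suc m))"
proof -
  have "(\<lambda>m. chebV (Suc (Suc m)) - chebV m)
      = (\<lambda>m. smult 2 (chebT (Suc (Suc m)) - chebT (Suc m)))"
    by (rule cheb_recurrence_unique)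
      (intro cheb_recurrence_intros | simp add: numeral_2_eq_2 one_pCons numeral_poly)+
  then show ?thesis
    by (rule fun_cong)
qed

lemma chebW_Suc_Suc_minus:
  "chebW (Suc (Suc m)) - chebW m = smult 2 (chebT (Suc (Suc m)) + chebT (Suc m))"
proof -
  have "(\<lambda>m. chebW (Suc (Suc m)) - chebW m)
      = (\<lambda>m. smult 2 (chebT (Suc (Suc m)) + chebT (Suc m)))"
    by (rule cheb_recurrence_unique)
      (intro cheb_recurrence_intros | simp add: numeral_2_eq_2 one_pCons numeral_poly)+
  then show ?thesis
    by (rule fun_cong)
qed

definition Tcoeff_T :: "nat \<Rightarrow> nat \<Rightarrow> real" where
  "Tcoeff_T m k = (if k = m then if m = 0 then 2 else 1 else 0)"

definition Tcoeff_U :: "nat \<Rightarrow> nat \<Rightarrow> real" where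
  "Tcoeff_U m k = (if k \<le> m \<and> even (m - k) then 2 else 0)"

definition Tcoeff_V :: "nat \<Rightarrow> nat \<Rightarrow> real" where
  "Tcoeff_V m k = (if k \<le> m then 2 * (-1) ^ (m - k) else 0)"

definition Tcoeff_W :: "nat \<Rightarrow> nat \<Rightarrow> real" where
  "Tcoeff_W m k = (if k \<le> m then 2 else 0)"

lemma chebT_eq_cheb_sum: "chebT m = cheb_sum (Tcoeff_T m) m"
proof (cases m)
  case (Suc j)
  have "cheb_sum (Tcoeff_T m) j = cheb_sum (\<lambda>_. 0) j"
    by (rule cheb_sum_cong) (simp add: Tcoeff_T_def Suc)
  also have "\<dots> = 0"
    by (induction j) simp_all
  finally show ?thesis
    by (simp add: Suc Tcoeff_T_def)
qed (simp add: Tcoeff_T_def)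

lemma chebU_eq_cheb_sum: "chebU m = cheb_sum (Tcoeff_U m) m"
proof (induction m rule: chebU.induct)
  case (3 m)
  have "cheb_sum (Tcoeff_U (Suc (Suc m))) (Suc (Suc m))
      = cheb_sum (Tcoeff_U m) m + smult 2 (chebT (Suc (Suc m)))"
    by (subst cheb_sum_Suc_Suc[where a = "Tcoeff_U m"])
      (auto simp: Tcoeff_U_def)
  also have "\<dots> = chebU m + smult 2 (chebT (Suc (Suc m)))"
    using 3 by simp
  also have "\<dots> = chebU (Suc (Suc m))"
    using chebU_Suc_Suc_minus[of m]
    by (simp del: chebU.simps chebT.simps add: algebra_simps)
  finally show ?case ..
qed (simp_all add: Tcoeff_U_def)

lemma chebV_eq_cheb_sum: "chebV m = cheb_sum (Tcoeff_V m) m"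
proof (induction m rule: chebV.induct)
  case (3 m)
  have "cheb_sum (Tcoeff_V (Suc (Suc m))) (Suc (Suc m))
      = cheb_sum (Tcoeff_V m) m + smult 2 (chebT (Suc (Suc m)) - chebT (Suc m))"
    by (subst cheb_sum_Suc_Suc[where a = "Tcoeff_V m"])
      (auto simp: Tcoeff_V_def Suc_diff_le smult_diff_right)
  also have "\<dots> = chebV m + smult 2 (chebT (Suc (Suc m)) - chebT (Suc m))"
    using 3 by simp
  also have "\<dots> = chebV (Suc (Suc m))"
    using chebV_Suc_Suc_minus[of m]
    by (simp del: chebV.simps chebT.simps add: algebra_simps)
  finally show ?case ..
qed (simp_all add: Tcoeff_V_def)

lemma chebW_eq_cheb_sum: "chebW m = cheb_sum (Tcoeff_W m) m"
proof (induction m rule: chebW.induct)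
  case (3 m)
  have "cheb_sum (Tcoeff_W (Suc (Suc m))) (Suc (Suc m))
      = cheb_sum (Tcoeff_W m) m + smult 2 (chebT (Suc (Suc m)) + chebT (Suc m))"
    by (subst cheb_sum_Suc_Suc[where a = "Tcoeff_W m"])
      (auto simp: Tcoeff_W_def smult_add_right)
  also have "\<dots> = chebW m + smult 2 (chebT (Suc (Suc m)) + chebT (Suc m))"
    using 3 by simp
  also have "\<dots> = chebW (Suc (Suc m))"
    using chebW_Suc_Suc_minus[of m]
    by (simp del: chebW.simps chebT.simps add: algebra_simps)
  finally show ?case ..
qed (simp_all add: Tcoeff_W_def)

lemma lincomb_eq_cheb_sum:
  assumes expansion: "\<And>m. Q m = cheb_sum (q m) m"
    and vanish: "\<And>m k. m < k \<Longrightarrow> q m k = 0"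
  shows "smult c0 (Q n) + smult c1 (Q (n - 1))
    = cheb_sum (\<lambda>k. c0 * q n k + c1 * q (n - 1) k) n"
proof -
  have "Q (n - 1) = cheb_sum (q (n - 1)) n"
    using cheb_sum_extend[of "n - 1" n "q (n - 1)"] expansion vanish by simp
  then show ?thesis
    by (simp add: expansion[of n] cheb_sum_add cheb_sum_smult)
qed

lemma quasi_orth1_cheb_sum_iff:
  assumes "\<And>m. Q m = cheb_sum (q m) m" and "\<And>m k. m < k \<Longrightarrow> q m k = 0"
  shows "quasi_orth1 Q n (cheb_sum a n)
    \<longleftrightarrow> (\<exists>c0 c1. c0 * c1 \<noteq> 0 \<and> (\<forall>k\<le>n. a k = c0 * q n k + c1 * q (n - 1) k))"
  by (simp only: quasi_orth1_def lincomb_eq_cheb_sum[OF assms] cheb_sum_eq_iff)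

lemma class_iff_quasi_orth1_chebC:
  assumes expansion: "\<And>m. Q m = cheb_sum (q m) m"
    and vanish: "\<And>m k. m < k \<Longrightarrow> q m k = 0"
    and class_imp: "cls \<Longrightarrow>
      c0 * c1 \<noteq> 0 \<and> (\<forall>k\<le>n. coeff P (n + k) = c0 * q n k + c1 * q (n - 1) k)"
    and imp_class: "\<And>d0 d1. d0 * d1 \<noteq> 0 \<Longrightarrow>
      \<forall>k\<le>n. coeff P (n + k) = d0 * q n k + d1 * q (n - 1) k \<Longrightarrow> cls"
  shows "(cls \<longleftrightarrow> quasi_orth1 Q n (chebC P n))
    \<and> (cls \<longrightarrow> chebC P n = smult c0 (Q n) + smult c1 (Q (n - 1)))"
proof -
  have "quasi_orth1 Q n (chebC P n) \<longleftrightarrow>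
      (\<exists>d0 d1. d0 * d1 \<noteq> 0 \<and> (\<forall>k\<le>n. coeff P (n + k) = d0 * q n k + d1 * q (n - 1) k))"
    unfolding chebC_eq_cheb_sum by (rule quasi_orth1_cheb_sum_iff[OF expansion vanish])
  then have "cls \<longleftrightarrow> quasi_orth1 Q n (chebC P n)"
    using class_imp imp_class by blast
  moreover have "chebC P n = smult c0 (Q n) + smult c1 (Q (n - 1))" if cls
  proof -
    have "\<forall>k\<le>n. coeff P (n + k) = c0 * q n k + c1 * q (n - 1) k"
      using class_imp[OF that] by blast
    then show ?thesis
      by (simp only: chebC_eq_cheb_sum lincomb_eq_cheb_sum[OF expansion vanish]
          cheb_sum_eq_iff)
  qed
  ultimately show ?thesis
    by blast
qed

lemma classT_imp_coeffs:
  assumes n: "2 \<le> n" and "classT P n"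
  shows "coeff P (2*n) * coeff P (2*n - 1) \<noteq> 0 \<and> (\<forall>k\<le>n.
    coeff P (n + k) = coeff P (2*n) * Tcoeff_T n k + coeff P (2*n - 1) * Tcoeff_T (n - 1) k)"
proof -
  have middle: "coeff P j = 0" if "n \<le> j" "j \<le> 2*n - 2" for j
    using assms that by (simp add: classT_def)
  have "coeff P (n + k) = coeff P (2*n) * Tcoeff_T n k + coeff P (2*n - 1) * Tcoeff_T (n - 1) k"
    if "k \<le> n" for k
  proof -
    have "k = n \<or> k = n - 1 \<or> k \<le> n - 2"
      using that by arith
    then consider "k = n" | "k = n - 1" | "k \<le> n - 2"
      by blast
    then show ?thesis
    proof cases
      case 1
      with n show ?thesis by (simp add: Tcoeff_T_def mult_2)
    next
      case 2
      moreover have "n + k = 2*n - 1"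
        using 2 n by simp
      ultimately show ?thesis
        using n by (simp add: Tcoeff_T_def)
    next
      case 3
      with n show ?thesis by (simp add: Tcoeff_T_def middle)
    qed
  qed
  with assms show ?thesis
    by (simp add: classT_def)
qed

lemma coeffs_imp_classT:
  assumes n: "2 \<le> n" and "c0 * c1 \<noteq> 0"
    and coeffs: "\<forall>k\<le>n. coeff P (n + k) = c0 * Tcoeff_T n k + c1 * Tcoeff_T (n - 1) k"
  shows "classT P n"
proof -
  have at: "coeff P j = c0 * Tcoeff_T n (j - n) + c1 * Tcoeff_T (n - 1) (j - n)"
    if "n \<le> j" "j \<le> 2*n" for j
    using coeffs[rule_format, of "j - n"] that by simp
  have "coeff P (2*n) = c0" "coeff P (2*n - 1) = c1"
    using at[of "2*n"] at[of "2*n - 1"] n by (simp_all add: Tcoeff_T_def)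
  moreover have "coeff P j = 0" if "n \<le> j" "j \<le> 2*n - 2" for j
  proof -
    have "j - n \<noteq> n" "j - n \<noteq> n - 1"
      using that n by auto
    then show ?thesis
      using at[of j] that by (simp add: Tcoeff_T_def)
  qed
  ultimately show ?thesis
    using assms by (simp add: classT_def)
qed

lemma Tcoeff_U_eq: "k \<le> Suc m \<Longrightarrow> Tcoeff_U m k = (if even (m + k) then 2 else 0)"
  by (cases "k = Suc m") (auto simp: Tcoeff_U_def)

lemma classU_imp_coeffs:
  assumes n: "0 < n" and "classU P n"
  shows "coeff P (2*n) / 2 * (coeff P (2*n - 1) / 2) \<noteq> 0 \<and> (\<forall>k\<le>n.
    coeff P (n + k)
      = coeff P (2*n) / 2 * Tcoeff_U n k + coeff P (2*n - 1) / 2 * Tcoeff_U (n - 1) k)"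
proof -
  have parity:
      "(even j \<longrightarrow> coeff P j = coeff P (2*n)) \<and> (odd j \<longrightarrow> coeff P j = coeff P (2*n - 1))"
    if "n \<le> j" "j \<le> 2*n" for j
    using assms(2) that unfolding classU_def by blast
  have "coeff P (n + k)
      = coeff P (2*n) / 2 * Tcoeff_U n k + coeff P (2*n - 1) / 2 * Tcoeff_U (n - 1) k"
    if "k \<le> n" for k
  proof -
    have "Tcoeff_U n k = (if even (n + k) then 2 else 0)"
      "Tcoeff_U (n - 1) k = (if odd (n + k) then 2 else 0)"
      using that n Tcoeff_U_eq[of k n] Tcoeff_U_eq[of k "n - 1"] by simp_all
    then show ?thesis
      using parity[of "n + k"] that by simp
  qed
  moreover have "coeff P (2*n) * coeff P (2*n - 1) \<noteq> 0"
    using assms(2) unfolding classU_def by blast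
  ultimately show ?thesis
    by simp
qed

lemma coeffs_imp_classU:
  assumes n: "0 < n" and "c0 * c1 \<noteq> 0"
    and coeffs: "\<forall>k\<le>n. coeff P (n + k) = c0 * Tcoeff_U n k + c1 * Tcoeff_U (n - 1) k"
  shows "classU P n"
proof -
  have parity: "coeff P j = (if even j then 2 * c0 else 2 * c1)" if "n \<le> j" "j \<le> 2*n" for j
  proof -
    have "n + (j - n) = j" "n - 1 + (j - n) = j - 1"
      "j - n \<le> Suc n" "j - n \<le> Suc (n - 1)"
      using that n by auto
    then have "Tcoeff_U n (j - n) = (if even j then 2 else 0)"
      "Tcoeff_U (n - 1) (j - n) = (if odd j then 2 else 0)"
      using that n Tcoeff_U_eq[of "j - n" n] Tcoeff_U_eq[of "j - n" "n - 1"] by auto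
    then show ?thesis
      using coeffs[rule_format, of "j - n"] that by auto
  qed
  have "coeff P (2*n) = 2 * c0" "coeff P (2*n - 1) = 2 * c1"
    using parity[of "2*n"] parity[of "2*n - 1"] n by auto
  then show ?thesis
    unfolding classU_def using parity assms(2) by auto
qed

lemma classV_imp_coeffs:
  assumes n: "0 < n" and "classV P n"
  shows "coeff P (2*n) / 2 * ((coeff P (2*n) + coeff P (2*n - 1)) / 2) \<noteq> 0 \<and> (\<forall>k\<le>n.
    coeff P (n + k) = coeff P (2*n) / 2 * Tcoeff_V n k
      + (coeff P (2*n) + coeff P (2*n - 1)) / 2 * Tcoeff_V (n - 1) k)"
proof -
  obtain alternating:
      "\<And>i. 1 \<le> i \<Longrightarrow> i \<le> n \<Longrightarrow> coeff P (2*n - i) = (-1) ^ (i - 1) * coeff P (2*n - 1)"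
    and nz: "coeff P (2*n) \<noteq> 0" "coeff P (2*n) \<noteq> - coeff P (2*n - 1)"
    using assms(2) unfolding classV_def by blast
  have "coeff P (n + k) = coeff P (2*n) / 2 * Tcoeff_V n k
      + (coeff P (2*n) + coeff P (2*n - 1)) / 2 * Tcoeff_V (n - 1) k" if "k \<le> n" for k
  proof (cases "k = n")
    case True
    moreover have "Tcoeff_V (n - 1) n = 0"
      using n by (simp add: Tcoeff_V_def)
    ultimately show ?thesis
      by (simp add: Tcoeff_V_def mult_2)
  next
    case False
    then have "n - k \<noteq> 0"
      using that by simp
    then obtain i where i: "n - k = Suc i"
      using not0_implies_Suc by blast
    have "Tcoeff_V n k = - 2 * (-1) ^ i"
      using that i by (simp add: Tcoeff_V_def)
    moreover have "n - 1 - k = i" "k \<le> n - 1"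
      using i by auto
    then have "Tcoeff_V (n - 1) k = 2 * (-1) ^ i"
      by (simp add: Tcoeff_V_def)
    moreover have "n + k = 2*n - Suc i" "Suc i \<le> n"
      using i that by auto
    then have "coeff P (n + k) = (-1) ^ i * coeff P (2*n - 1)"
      using alternating[of "Suc i"] by simp
    ultimately show ?thesis
      by (simp add: algebra_simps)
  qed
  moreover have "coeff P (2*n) + coeff P (2*n - 1) \<noteq> 0"
    using nz(2) by linarith
  ultimately show ?thesis
    using nz(1) by simp
qed

lemma coeffs_imp_classV:
  assumes n: "0 < n" and "c0 * c1 \<noteq> 0"
    and coeffs: "\<forall>k\<le>n. coeff P (n + k) = c0 * Tcoeff_V n k + c1 * Tcoeff_V (n - 1) k"
  shows "classV P n"
proof -
  have at: "coeff P (2*n - i) = c0 * Tcoeff_V n (n - i) + c1 * Tcoeff_V (n - 1) (n - i)"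
    if "i \<le> n" for i
    using coeffs[rule_format, of "n - i"] that by (simp add: mult_2)
  have top: "coeff P (2*n) = 2 * c0"
    using at[of 0] n by (simp add: Tcoeff_V_def)
  have alternating: "coeff P (2*n - Suc l) = (-1) ^ l * (2 * c1 - 2 * c0)" if "l < n" for l
  proof -
    have "n - (n - Suc l) = Suc l" "n - 1 - (n - Suc l) = l" "n - Suc l \<le> n - 1"
      using that by auto
    then have "Tcoeff_V n (n - Suc l) = - 2 * (-1) ^ l"
      "Tcoeff_V (n - 1) (n - Suc l) = 2 * (-1) ^ l"
      by (simp_all add: Tcoeff_V_def)
    with at[of "Suc l"] that show ?thesis
      by (simp add: algebra_simps)
  qed
  have second: "coeff P (2*n - 1) = 2 * c1 - 2 * c0"
    using alternating[of 0] n by simp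
  have "coeff P (2*n - i) = (-1) ^ (i - 1) * coeff P (2*n - 1)" if "1 \<le> i" "i \<le> n" for i
    using alternating[of "i - 1"] that unfolding second by simp
  moreover have "coeff P (2*n) \<noteq> 0" "coeff P (2*n) \<noteq> - coeff P (2*n - 1)"
    using top second assms(2) by auto
  ultimately show ?thesis
    unfolding classV_def by blast
qed

lemma classW_imp_coeffs:
  assumes n: "0 < n" and "classW P n"
  shows "coeff P (2*n) / 2 * ((coeff P (2*n - 1) - coeff P (2*n)) / 2) \<noteq> 0 \<and> (\<forall>k\<le>n.
    coeff P (n + k) = coeff P (2*n) / 2 * Tcoeff_W n k
      + (coeff P (2*n - 1) - coeff P (2*n)) / 2 * Tcoeff_W (n - 1) k)"
proof -
  obtain plateau: "\<And>j. n \<le> j \<Longrightarrow> j \<le> 2*n - 1 \<Longrightarrow> coeff P j = coeff P (2*n - 1)"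
    and nz: "coeff P (2*n) \<noteq> 0" "coeff P (2*n) \<noteq> coeff P (2*n - 1)"
    using assms(2) unfolding classW_def by blast
  have "coeff P (n + k) = coeff P (2*n) / 2 * Tcoeff_W n k
      + (coeff P (2*n - 1) - coeff P (2*n)) / 2 * Tcoeff_W (n - 1) k" if "k \<le> n" for k
  proof (cases "k = n")
    case True
    moreover have "Tcoeff_W (n - 1) n = 0"
      using n by (simp add: Tcoeff_W_def)
    ultimately show ?thesis
      by (simp add: Tcoeff_W_def mult_2)
  next
    case False
    then have "coeff P (n + k) = coeff P (2*n - 1)"
      using that by (intro plateau) auto
    moreover have "k \<le> n - 1"
      using False that by simp
    ultimately show ?thesis
      using that by (simp add: Tcoeff_W_def field_simps)
  qed
  with nz show ?thesis
    by simp
qed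

lemma coeffs_imp_classW:
  assumes n: "0 < n" and "c0 * c1 \<noteq> 0"
    and coeffs: "\<forall>k\<le>n. coeff P (n + k) = c0 * Tcoeff_W n k + c1 * Tcoeff_W (n - 1) k"
  shows "classW P n"
proof -
  have at: "coeff P j = c0 * Tcoeff_W n (j - n) + c1 * Tcoeff_W (n - 1) (j - n)"
    if "n \<le> j" "j \<le> 2*n" for j
    using coeffs[rule_format, of "j - n"] that by simp
  have "Tcoeff_W (n - 1) n = 0"
    using n by (simp add: Tcoeff_W_def)
  then have top: "coeff P (2*n) = 2 * c0"
    using at[of "2*n"] by (simp add: Tcoeff_W_def)
  have plateau: "coeff P j = 2 * c0 + 2 * c1" if "n \<le> j" "j \<le> 2*n - 1" for j
  proof -
    have "j - n \<le> n - 1"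
      using that by arith
    with at[of j] that show ?thesis
      by (simp add: Tcoeff_W_def)
  qed
  have second: "coeff P (2*n - 1) = 2 * c0 + 2 * c1"
    by (rule plateau) (use n in auto)
  have "coeff P (2*n) \<noteq> 0" "coeff P (2*n) \<noteq> coeff P (2*n - 1)"
    using assms(2) unfolding top second by auto
  with plateau second show ?thesis
    unfolding classW_def by auto
qed

lemma Tcoeff_eq_0_above:
  assumes "m < k"
  shows "Tcoeff_T m k = 0" "Tcoeff_U m k = 0" "Tcoeff_V m k = 0" "Tcoeff_W m k = 0"
  using assms by (simp_all add: Tcoeff_T_def Tcoeff_U_def Tcoeff_V_def Tcoeff_W_def)

lemma classT_iff_quasi_orth1_chebC:
  assumes "2 \<le> n"
  shows "(classT P n \<longleftrightarrow> quasi_orth1 chebT n (chebC P n))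
    \<and> (classT P n \<longrightarrow>
      chebC P n = smult (coeff P (2*n)) (chebT n) + smult (coeff P (2*n - 1)) (chebT (n - 1)))"
  by (rule class_iff_quasi_orth1_chebC[OF chebT_eq_cheb_sum])
    (erule Tcoeff_eq_0_above(1), erule classT_imp_coeffs[OF assms],
      erule coeffs_imp_classT[OF assms], assumption)

lemma classU_iff_quasi_orth1_chebC:
  assumes "0 < n"
  shows "(classU P n \<longleftrightarrow> quasi_orth1 chebU n (chebC P n))
    \<and> (classU P n \<longrightarrow> chebC P n
      = smult (coeff P (2*n) / 2) (chebU n) + smult (coeff P (2*n - 1) / 2) (chebU (n - 1)))"
  by (rule class_iff_quasi_orth1_chebC[OF chebU_eq_cheb_sum])
    (erule Tcoeff_eq_0_above(2), erule classU_imp_coeffs[OF assms],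
      erule coeffs_imp_classU[OF assms], assumption)

lemma classV_iff_quasi_orth1_chebC:
  assumes "0 < n"
  shows "(classV P n \<longleftrightarrow> quasi_orth1 chebV n (chebC P n))
    \<and> (classV P n \<longrightarrow> chebC P n = smult (coeff P (2*n) / 2) (chebV n)
      + smult ((coeff P (2*n) + coeff P (2*n - 1)) / 2) (chebV (n - 1)))"
  by (rule class_iff_quasi_orth1_chebC[OF chebV_eq_cheb_sum])
    (erule Tcoeff_eq_0_above(3), erule classV_imp_coeffs[OF assms],
      erule coeffs_imp_classV[OF assms], assumption)

lemma classW_iff_quasi_orth1_chebC:
  assumes "0 < n"
  shows "(classW P n \<longleftrightarrow> quasi_orth1 chebW n (chebC P n))
    \<and> (classW P n \<longrightarrow> chebC P n = smult (coeff P (2*n) / 2) (chebW n)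
      + smult ((coeff P (2*n - 1) - coeff P (2*n)) / 2) (chebW (n - 1)))"
  by (rule class_iff_quasi_orth1_chebC[OF chebW_eq_cheb_sum])
    (erule Tcoeff_eq_0_above(4), erule classW_imp_coeffs[OF assms],
      erule coeffs_imp_classW[OF assms], assumption)

theorem mainTheorem1:
  fixes P :: "real poly" and n :: nat
  assumes "n \<ge> 2"
    and "degree P = 2 * n"
    and "self_reciprocal P n"
  shows "(classT P n \<longleftrightarrow> quasi_orth1 chebT n (chebC P n))
       \<and> (classU P n \<longleftrightarrow> quasi_orth1 chebU n (chebC P n))
       \<and> (classV P n \<longleftrightarrow> quasi_orth1 chebV n (chebC P n))
       \<and> (classW P n \<longleftrightarrow> quasi_orth1 chebW n (chebC P n))
       \<and> (classT P n \<longrightarrow> chebC P n =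
            smult (coeff P (2*n)) (chebT n) + smult (coeff P (2*n - 1)) (chebT (n - 1)))
       \<and> (classU P n \<longrightarrow> chebC P n =
            smult (coeff P (2*n) / 2) (chebU n) + smult (coeff P (2*n - 1) / 2) (chebU (n - 1)))
       \<and> (classV P n \<longrightarrow> chebC P n =
            smult (coeff P (2*n) / 2) (chebV n)
            + smult ((coeff P (2*n) + coeff P (2*n - 1)) / 2) (chebV (n - 1)))
       \<and> (classW P n \<longrightarrow> chebC P n =
            smult (coeff P (2*n) / 2) (chebW n)
            + smult ((coeff P (2*n - 1) - coeff P (2*n)) / 2) (chebW (n - 1)))"
proof -
  from \<open>n \<ge> 2\<close> have "0 < n"
    by simp
  with \<open>n \<ge> 2\<close> show ?thesis
    using classT_iff_quasi_orth1_chebC classU_iff_quasi_orth1_chebC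
      classV_iff_quasi_orth1_chebC classW_iff_quasi_orth1_chebC
    by blast
qed

end
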